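(* Let $(P_s)_{s\in\Gamma}$ be a family of bounded linear projections on a Banach space $X$ indexed by a directed poset $\Gamma$ such that: (1) $X=\bigcup_{s\in\Gamma}P_sX$ and each $P_sX$ is separable; (2) $s\leqslant t$ implies $P_s=P_s\circ P_t=P_t\circ P_s$; (3) whenever $s_0<s_1<\dots$ in $\Gamma$, $t=\sup_ns_n$ exists in $\Gamma$ and $P_tX=\overline{\bigcup_nP_{s_n}X}$. Then there exists a closed cofinal set $\Gamma'\subseteq\Gamma$ such that $\sup_{s\in\Gamma'}\|P_s\|<\infty$.
   Context: A subset $\Gamma'$ of a poset $\Gamma$ is cofinal if for every $s\in\Gamma$ there is $t\in\Gamma'$ with $s\leqslant t$; it is closed if $\sup_n s_n\in\Gamma'$ whenever $s_0<s_1<\dots$ is a sequence in $\Gamma'$ (whose supremum exists in $\Gamma$). *)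

theory Defs
  imports "HOL-Analysis.Analysis"
begin

definition is_seq_sup :: "(nat \<Rightarrow> 'i::order) \<Rightarrow> 'i \<Rightarrow> bool" where
  "is_seq_sup s t \<longleftrightarrow> (\<forall>n. s n \<le> t) \<and> (\<forall>u. (\<forall>n. s n \<le> u) \<longrightarrow> t \<le> u)"

definition cofinal_in :: "'i::order set \<Rightarrow> bool" where
  "cofinal_in G \<longleftrightarrow> (\<forall>s. \<exists>t\<in>G. s \<le> t)"

definition closed_in_poset :: "'i::order set \<Rightarrow> bool" where
  "closed_in_poset G \<longleftrightarrow>
     (\<forall>s t. (\<forall>n. s n \<in> G \<and> s n < s (Suc n)) \<and> is_seq_sup s t \<longrightarrow> t \<in> G)"

end

theory Submission
  imports Defs
begin

text \<open>
  For every bound C the sublevel set {s. norm (P s) \<le> C} is closed: if P t X is the closure of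
  the union of the ranges P (s n) X, then every P t x is approximated by P (s n) x, because
  P (s n) fixes the approximants from its own range and P (s n) \<circ> P t = P (s n).
  It remains to see that some sublevel set is cofinal; this is clear if there is a greatest
  index. Otherwise, if none were cofinal, for each n there would be an index S n above which all
  norms exceed n, and a strictly increasing chain T n \<ge> S n would have a supremum whose
  projection has norm exceeding every n.
\<close>

lemma norm_blinfun_le_of_range_subset_closure:
  fixes Q :: "'a::real_normed_vector \<Rightarrow>\<^sub>L 'a" and R :: "'b \<Rightarrow> ('a \<Rightarrow>\<^sub>L 'a)"
  assumes bound: "\<And>b. norm (R b) \<le> C"
    and idem: "\<And>b. R b o\<^sub>L R b = R b"
    and factor: "\<And>b. R b o\<^sub>L Q = R b"
    and range: "range (blinfun_apply Q) \<subseteq> closure (\<Union>b. range (blinfun_apply (R b)))"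
  shows "norm Q \<le> C"
proof -
  have C: "0 \<le> C" using bound norm_ge_zero order_trans by blast
  have "Q x \<in> closure (cball 0 (C * norm x))" for x
    unfolding closure_approachable
  proof (intro allI impI)
    fix e :: real
    assume "0 < e"
    with C have "0 < e / (C + 1)" by simp
    with range obtain z where "z \<in> (\<Union>b. range (R b))" and z: "dist (Q x) z < e / (C + 1)"
      by (meson closure_approachableD rangeI subsetD)
    then obtain b w where zw: "z = R b w" by blast
    have "R b z = z" using idem[of b] zw by (metis blinfun_apply_blinfun_compose)
    moreover have "R b (Q x) = R b x" using factor[of b] by (metis blinfun_apply_blinfun_compose)
    ultimately have "Q x - R b x = (Q x - z) - R b (Q x - z)" by (simp add: blinfun.diff_right)
    then have "dist (R b x) (Q x) \<le> norm (Q x - z) + norm (R b (Q x - z))"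
      by (metis dist_norm norm_minus_commute norm_triangle_ineq4)
    also have "\<dots> \<le> (C + 1) * dist (Q x) z"
      using norm_blinfun[of "R b" "Q x - z"] bound[of b]
        mult_right_mono[OF bound[of b] norm_ge_zero[of "Q x - z"]]
      by (simp add: dist_norm algebra_simps)
    also have "\<dots> < e" using z C by (simp add: field_simps)
    finally have "dist (R b x) (Q x) < e" .
    moreover have "R b x \<in> cball 0 (C * norm x)"
      using norm_blinfun[of "R b" x] mult_right_mono[OF bound[of b] norm_ge_zero[of x]] by simp
    ultimately show "\<exists>y\<in>cball 0 (C * norm x). dist y (Q x) < e" by blast
  qed
  then show ?thesis by (intro norm_blinfun_bound C) simp
qed

lemma is_seq_sup_unique: "is_seq_sup s t \<Longrightarrow> is_seq_sup s t' \<Longrightarrow> t = t'"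
  unfolding is_seq_sup_def by (metis order.antisym)

lemma closed_in_poset_norm_le:
  fixes P :: "'i::order \<Rightarrow> ('a::banach \<Rightarrow>\<^sub>L 'a)"
  assumes proj: "\<And>s. P s o\<^sub>L P s = P s"
    and compat: "\<And>s t. s \<le> t \<Longrightarrow> P s o\<^sub>L P t = P s"
    and chains: "\<And>s. \<forall>n. s n < s (Suc n) \<Longrightarrow>
       \<exists>t. is_seq_sup s t \<and>
            range (blinfun_apply (P t)) = closure (\<Union>n. range (blinfun_apply (P (s n))))"
  shows "closed_in_poset {s. norm (P s) \<le> C}"
  unfolding closed_in_poset_def
proof (intro allI impI)
  fix s :: "nat \<Rightarrow> 'i" and t
  assume "(\<forall>n. s n \<in> {s. norm (P s) \<le> C} \<and> s n < s (Suc n)) \<and> is_seq_sup s t"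
  then have bound: "\<And>n. norm (P (s n)) \<le> C" and inc: "\<forall>n. s n < s (Suc n)"
    and sup: "is_seq_sup s t" by auto
  obtain t' where "is_seq_sup s t'"
    and t': "range (blinfun_apply (P t')) = closure (\<Union>n. range (blinfun_apply (P (s n))))"
    using chains[OF inc] by blast
  then have "t' = t" using sup is_seq_sup_unique by blast
  moreover have "\<And>n. s n \<le> t" using sup unfolding is_seq_sup_def by blast
  ultimately have "norm (P t) \<le> C"
    using norm_blinfun_le_of_range_subset_closure[of "\<lambda>n. P (s n)" C "P t"] t' bound proj compat
    by simp
  then show "t \<in> {s. norm (P s) \<le> C}" by simp
qed

lemma strict_chain_above:
  fixes S :: "nat \<Rightarrow> 'i::order"
  assumes directed: "\<forall>s t::'i. \<exists>u. s \<le> u \<and> t \<le> u"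
    and no_greatest: "\<not> (\<exists>m::'i. \<forall>s. s \<le> m)"
  shows "\<exists>T. (\<forall>n. T n < T (Suc n)) \<and> (\<forall>n. S n \<le> T n)"
proof -
  have above: "\<exists>u. a < u \<and> b \<le> u" for a b :: 'i
  proof -
    obtain v where v: "a \<le> v" "b \<le> v" using directed by blast
    obtain w where "\<not> w \<le> v" using no_greatest by blast
    then obtain u where "v < u" "w \<le> u" using directed by (metis order.not_eq_order_implies_strict)
    then show ?thesis using v by (meson order.trans le_less_trans less_imp_le)
  qed
  have "\<exists>T. \<forall>n. S n \<le> T n \<and> T n < T (Suc n)"
    by (rule dependent_nat_choice) (use above in \<open>auto\<close>)
  then show ?thesis by blast
qed

lemma cofinal_sublevel_set:
  fixes f :: "'i::order \<Rightarrow> real"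
  assumes directed: "\<forall>s t::'i. \<exists>u. s \<le> u \<and> t \<le> u"
    and chains_bounded: "\<And>s :: nat \<Rightarrow> 'i. \<forall>n. s n < s (Suc n) \<Longrightarrow> \<exists>t. \<forall>n. s n \<le> t"
  shows "\<exists>C. cofinal_in {s. f s \<le> C}"
proof (cases "\<exists>m::'i. \<forall>s. s \<le> m")
  case True
  then obtain m :: 'i where "\<forall>s. s \<le> m" by blast
  then have "cofinal_in {s. f s \<le> f m}" unfolding cofinal_in_def by blast
  then show ?thesis by blast
next
  case False
  show ?thesis
  proof (rule ccontr)
    assume "\<nexists>C. cofinal_in {s. f s \<le> C}"
    then have "\<not> cofinal_in {s. f s \<le> real n}" for n :: nat by blast
    then have "\<forall>n::nat. \<exists>s. \<forall>t. s \<le> t \<longrightarrow> real n < f t"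
      unfolding cofinal_in_def by (meson mem_Collect_eq not_le)
    then obtain S :: "nat \<Rightarrow> 'i" where S: "\<And>n t. S n \<le> t \<Longrightarrow> real n < f t" by metis
    obtain T where "\<forall>n. T n < T (Suc n)" and ST: "\<And>n. S n \<le> T n"
      using strict_chain_above[OF directed False] by blast
    then obtain t where "\<And>n. T n \<le> t" using chains_bounded by blast
    then have "\<And>n. real n < f t" using S ST by (meson order.trans)
    moreover obtain n :: nat where "f t < real n" using reals_Archimedean2 by blast
    ultimately show False by (meson less_asym)
  qed
qed

theorem proposition4p1:
  fixes P :: "'i::order \<Rightarrow> ('a::banach \<Rightarrow>\<^sub>L 'a)"
  assumes directed: "\<forall>s t::'i. \<exists>u. s \<le> u \<and> t \<le> u"
    and proj: "\<forall>s. P s o\<^sub>L P s = P s"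
    and cover: "(\<Union>s. range (blinfun_apply (P s))) = UNIV"
    and sep: "\<forall>s. separable_space (subtopology euclidean (range (blinfun_apply (P s))))"
    and compat: "\<forall>s t. s \<le> t \<longrightarrow> P s = P s o\<^sub>L P t \<and> P s = P t o\<^sub>L P s"
    and chains: "\<forall>s. (\<forall>n. s n < s (Suc n)) \<longrightarrow>
       (\<exists>t. is_seq_sup s t \<and>
            range (blinfun_apply (P t)) = closure (\<Union>n. range (blinfun_apply (P (s n)))))"
  shows "\<exists>G. closed_in_poset G \<and> cofinal_in G \<and> (\<exists>C. \<forall>s\<in>G. norm (P s) \<le> C)"
proof -
  have "\<exists>t. \<forall>n. s n \<le> t" if "\<forall>n. s n < s (Suc n)" for s :: "nat \<Rightarrow> 'i"
    using chains that unfolding is_seq_sup_def by blast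
  then obtain C where "cofinal_in {s. norm (P s) \<le> C}"
    using cofinal_sublevel_set[OF directed, of "\<lambda>s. norm (P s)"] by blast
  moreover have "closed_in_poset {s. norm (P s) \<le> C}"
    using proj compat chains by (intro closed_in_poset_norm_le) auto
  ultimately show ?thesis by blast
qed

end
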